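(* Let $Y$ be a CARMA$(p,q)$ process with $p\le3$, $\Re(\lambda_j)<0$ and $\Re(\mu_k)\neq0$ for all $j,k$, and distinct zeroes $\lambda_1,\dots,\lambda_p$ of $a$; let $Y^\Delta_n=Y_{n\Delta}$ and let $\tilde Y^{\Delta,h}$, $h\in(0,1)$, be its approximating Riemann sum. Then: (a) $\Phi_\Delta(B)Y^\Delta$ and $\Phi_\Delta(B)\tilde Y^{\Delta,h}$ have the same asymptotic autocovariance structure as $\Delta\downarrow0$ for every $h\in(0,1)$ if $p-q=1$; for $h=(3\pm\sqrt3)/6$ if $p-q=2$; and for $h=\big(15\pm\sqrt{225-30\sqrt{30}}\big)/30$ if $p-q=3$. (b) The moving average polynomials $\Theta_\Delta(z)$ and $\tilde\Theta_{\Delta,h}(z)/\tilde\theta^{\Delta,h}_0$ coincide asymptotically as $\Delta\downarrow0$ if and only if the CARMA process is invertible (i.e. $\Re(\mu_k)>0$ for all $k$) and $|\chi_{p-q,i}(h)|<1$ for all $i$; that is, for every $h\in(0,1)$ if $p-q=1$, and for $h=(3+\sqrt3)/6$ if $p-q=2$. For $p-q=3$ no such $h$ exists.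
   Context: $L$ is a two-sided Lévy process with $\mathbb{E}L_1=0$, $\mathbb{E}L_1^2=1$; $\Delta L_n:=L_{n\Delta}-L_{(n-1)\Delta}$. CARMA setting: integers $p>q\ge0$, $\sigma>0$, $a(z)=\prod_{i=1}^p(z-\lambda_i)$, $b(z)=\prod_{i=1}^q(z+\mu_i)$ real polynomials without common zeroes; $Y_t=\int g(t-u)dL_u$ with $g(t)=\sigma\sum_\lambda\mathrm{Res}_{z=\lambda}(e^{zt}b(z)/a(z))$ for $t>0$, $g=0$ on $(-\infty,0]$. $\Phi_\Delta(z)=\prod_{i=1}^p(1-e^{\Delta\lambda_i}z)$, $B$ the backshift operator. Sampled process: $\Phi_\Delta(B)Y^\Delta_n=\Theta_\Delta(B)Z^\Delta_n$ with $Z^\Delta$ white noise of variance $\sigma^2_\Delta$ and $\Theta_\Delta$ the minimum-phase spectral factor (degree $p-1$, $\Theta_\Delta(0)=1$, no zeroes inside the unit circle). It is known that as $\Delta\downarrow0$, $\Theta_\Delta(z)=\prod_{i=1}^{p-q-1}(1+\eta_i z)\prod_{k=1}^q(1-\zeta_kz)$ with $\zeta_k=1-\operatorname{sgn}(\Re\mu_k)\mu_k\Delta+o(\Delta)$, $\eta_i=\xi_i-1-\sqrt{(\xi_i-1)^2-1}+o(1)$ where $\xi_1,\dots,\xi_{p-q-1}$ are the zeroes of $\alpha_{p-q-1}$ (defined by $\sinh(z)/(\cosh(z)-1+x)=\sum_{k\ge0}\alpha_k(x)z^{2k+1}$), and $\sigma^2_\Delta=\sigma^2\Delta^{2(p-q)-1}\big/\big((2(p-q)-1)!\prod_{i}\eta_i\big)\,(1+o(1))$.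 Riemann sum: $\tilde Y^{\Delta,h}_n=\sum_{j\ge0}g(\Delta(j+h))\Delta L_{n-j}$; it satisfies $\Phi_\Delta(B)\tilde Y^{\Delta,h}_n=\sigma\tilde\Theta_{\Delta,h}(B)\Delta L_n$, where for $p\in\{2,3\}$, $h\in(0,1)$, as $\Delta\downarrow0$, $\sigma\tilde\Theta_{\Delta,h}(z)=\tilde\theta_0^{\Delta,h}\prod_{i=1}^q(1-(1-\Delta\mu_i+o(\Delta))z)\prod_{i=1}^{p-q-1}(1-\chi_{p-q,i}(h)z)$ with $\tilde\theta^{\Delta,h}_0=g(h\Delta)=\sigma(h\Delta)^{p-q-1}/(p-q-1)!\,(1+o(1))$, $\chi_{2,1}(h)=(h-1)/h+o(1)$ and $\chi_{3,j}(h)=\frac{2(h-1)^2}{2(h-1)h-1-(-1)^j\sqrt{1-4(h-1)h}}+o(1)$, $j=1,2$ (and $\tilde\Theta_{\Delta,h}$ of the $p=1$ case is the constant $e^{\Delta h\lambda_1}$). "Same asymptotic autocovariance structure" means that the leading-order terms, as $\Delta\downarrow0$, of the autocovariances at every lag of the two stationary sequences coincide; "coincide asymptotically" means that the factors of the two polynomials agree to the leading orders displayed above. *)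

theory Defs
  imports "HOL-Analysis.Analysis" "HOL-Library.Landau_Symbols"
    "HOL-Computational_Algebra.Formal_Power_Series" "HOL-Computational_Algebra.Polynomial"
begin

(* alpha k x : coefficient of z^(2k+1) in the Taylor expansion of sinh z / (cosh z - 1 + x)
   (for x \<noteq> 0, where the function is analytic at 0). *)
definition fps_sinh :: "complex fps" where
  "fps_sinh = fps_const (1/2) * (fps_exp 1 - fps_exp (-1))"

definition fps_cosh :: "complex fps" where
  "fps_cosh = fps_const (1/2) * (fps_exp 1 + fps_exp (-1))"

definition alpha :: "nat \<Rightarrow> complex \<Rightarrow> complex" where
  "alpha k x = fps_nth (fps_sinh * inverse (fps_cosh - 1 + fps_const x)) (2 * k + 1)"

(* limit of eta_i in terms of the zero xi_i of alpha_{p-q-1} *)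
definition eta_lim :: "complex \<Rightarrow> complex" where
  "eta_lim \<xi> = \<xi> - 1 - csqrt ((\<xi> - 1)\<^sup>2 - 1)"

(* chi_{m,i+1}(h), limits of the non-unit zero factors of the Riemann-sum MA polynomial *)
definition chi_lim :: "nat \<Rightarrow> nat \<Rightarrow> real \<Rightarrow> real" where
  "chi_lim m i h =
     (if m = 2 then (h - 1) / h
      else 2 * (h - 1)\<^sup>2 /
             (2 * (h - 1) * h - 1 - (-1) ^ (i + 1) * sqrt (1 - 4 * (h - 1) * h)))"

definition Theta_poly :: "nat \<Rightarrow> nat \<Rightarrow> (nat \<Rightarrow> complex) \<Rightarrow> (nat \<Rightarrow> complex) \<Rightarrow> complex poly" where
  "Theta_poly m q \<eta> \<zeta> = (\<Prod>i<m - 1. [:1, \<eta> i:]) * (\<Prod>k<q. [:1, - \<zeta> k:])"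

definition RTheta_poly :: "nat \<Rightarrow> nat \<Rightarrow> (nat \<Rightarrow> complex) \<Rightarrow> (nat \<Rightarrow> complex) \<Rightarrow> complex poly" where
  "RTheta_poly m q \<rho> chi = (\<Prod>k<q. [:1, - \<rho> k:]) * (\<Prod>i<m - 1. [:1, - chi i:])"

(* autocovariance at lag k of the moving average  P(B) W  with W white noise of variance v *)
definition ma_acov :: "real \<Rightarrow> complex poly \<Rightarrow> nat \<Rightarrow> complex" where
  "ma_acov v P k = of_real v * (\<Sum>j\<le>degree P. coeff P j * coeff P (j + k))"

end

theory Submission
  imports Defs
begin

text \<open>
  Under the assumed expansions both noise variances are of exact order \<open>\<Delta>^(2(p-q)-1)\<close> and both
  MA polynomials converge coefficientwise, so the autocovariances are asymptotically equivalent at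
  every lag iff finitely many limit equations hold.  For \<open>p - q = 1\<close> the limits coincide; for
  \<open>p - q = 2, 3\<close> the zeros of \<open>\<alpha>\<^sub>1, \<alpha>\<^sub>2\<close> determine the limits of \<open>\<eta>\<close>
  explicitly and the equations collapse to \<open>h(1-h) = 1/6\<close>, resp. \<open>(h(1-h))\<^sup>2 = 1/30\<close>.

  The MA factors match iff the first-order terms of \<open>\<zeta>\<close> and \<open>\<rho>\<close> agree, i.e. \<open>Re \<mu> > 0\<close>, and
  the limits of \<open>-\<eta>\<close> are a permutation of the \<open>\<chi>\<close>.  Since \<open>0 < \<eta> < 1\<close> in the limit, this
  singles out the root \<open>h = (3 + \<surd>3)/6\<close> for \<open>p - q = 2\<close> and is impossible for \<open>p - q = 3\<close>,
  where \<open>|\<chi>\<^sub>3\<^sub>,\<^sub>1| \<ge> 1\<close>.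
\<close>

section \<open>Asymptotic equivalence through scaled limits\<close>

lemma asymp_equiv_iff_same_limit:
  fixes s t g :: "'a \<Rightarrow> 'b::real_normed_field"
  assumes F: "F \<noteq> bot" and g: "eventually (\<lambda>x. g x \<noteq> 0) F"
    and s: "((\<lambda>x. s x / g x) \<longlongrightarrow> c) F" and t: "((\<lambda>x. t x / g x) \<longlongrightarrow> d) F"
    and c: "c \<noteq> 0"
  shows "s \<sim>[F] t \<longleftrightarrow> c = d"
proof
  assume "s \<sim>[F] t"
  then have "(\<lambda>x. s x / g x) \<sim>[F] (\<lambda>x. t x / g x)"
    by (rule asymp_equiv_divide[OF _ asymp_equiv_refl])
  from asymp_equiv_tendsto_transfer[OF this s] show "c = d"
    using tendsto_unique[OF F _ t] by blast
next
  assume "c = d"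
  with s t c have "((\<lambda>x. (s x / g x) / (t x / g x)) \<longlongrightarrow> 1) F"
    using tendsto_divide[OF s t] by simp
  then have "((\<lambda>x. s x / t x) \<longlongrightarrow> 1) F"
    by (rule Lim_transform_eventually) (use g in \<open>eventually_elim, simp\<close>)
  then show "s \<sim>[F] t"
    by (rule asymp_equivI')
qed

lemma tendsto_div_power_if_asymp_equiv:
  fixes f :: "real \<Rightarrow> 'a::real_normed_field"
  assumes "f \<sim>[at_right 0] (\<lambda>x. C * of_real x ^ n)"
  shows "((\<lambda>x. f x / of_real x ^ n) \<longlongrightarrow> C) (at_right 0)"
proof -
  have "(\<lambda>x. f x / of_real x ^ n) \<sim>[at_right 0] (\<lambda>x. C * of_real x ^ n / of_real x ^ n)"
    using assms by (rule asymp_equiv_divide[OF _ asymp_equiv_refl])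
  also have "\<dots> \<sim>[at_right 0] (\<lambda>_. C)"
    by (rule asymp_equiv_refl_ev) (use eventually_at_right_less[of 0] in \<open>eventually_elim, simp\<close>)
  finally show ?thesis
    by (rule asymp_equivD_const)
qed

lemma tendsto_1_if_first_order:
  fixes z :: "real \<Rightarrow> 'a::real_normed_field"
  assumes "((\<lambda>x. (z x - (1 - a * of_real x)) / of_real x) \<longlongrightarrow> 0) (at_right 0)"
  shows "(z \<longlongrightarrow> 1) (at_right 0)"
proof -
  have "((\<lambda>x. (z x - (1 - a * of_real x)) / of_real x * of_real x + (1 - a * of_real x))
          \<longlongrightarrow> 1) (at_right 0)"
    using tendsto_add[OF tendsto_mult[OF assms tendsto_of_real[OF tendsto_ident_at]]
        tendsto_diff[OF tendsto_const tendsto_mult[OF tendsto_const tendsto_of_real[OF tendsto_ident_at]]]]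
    by simp
  then show ?thesis
    by (rule Lim_transform_eventually)
      (use eventually_at_right_less[of 0] in \<open>eventually_elim, simp\<close>)
qed

lemma first_order_diff_tendsto_0_iff:
  fixes z r :: "real \<Rightarrow> 'a::real_normed_field"
  assumes z: "((\<lambda>x. (z x - (1 - a * of_real x)) / of_real x) \<longlongrightarrow> 0) (at_right 0)"
    and r: "((\<lambda>x. (r x - (1 - b * of_real x)) / of_real x) \<longlongrightarrow> 0) (at_right 0)"
  shows "((\<lambda>x. (z x - r x) / of_real x) \<longlongrightarrow> 0) (at_right 0) \<longleftrightarrow> a = b"
proof -
  have "((\<lambda>x. (z x - (1 - a * of_real x)) / of_real x - (r x - (1 - b * of_real x)) / of_real x
          + (b - a)) \<longlongrightarrow> b - a) (at_right 0)"
    using tendsto_add[OF tendsto_diff[OF z r] tendsto_const[of "b - a"]] by simp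
  then have "((\<lambda>x. (z x - r x) / of_real x) \<longlongrightarrow> b - a) (at_right 0)"
    by (rule Lim_transform_eventually)
      (use eventually_at_right_less[of 0] in \<open>eventually_elim, simp add: field_simps\<close>)
  then show ?thesis
    using tendsto_unique[OF trivial_limit_at_right_real] by force
qed

lemma tendsto_neg_diff_0_iff:
  fixes u v :: "'a \<Rightarrow> 'b::real_normed_vector"
  assumes F: "F \<noteq> bot" and u: "(u \<longlongrightarrow> a) F" and v: "(v \<longlongrightarrow> b) F"
  shows "((\<lambda>x. - u x - v x) \<longlongrightarrow> 0) F \<longleftrightarrow> - a = b"
proof -
  have "((\<lambda>x. - u x - v x) \<longlongrightarrow> - a - b) F"
    by (intro tendsto_intros u v)
  then show ?thesis
    using tendsto_unique[OF F] by force
qed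

section \<open>Autocovariances of moving averages\<close>

lemma tendsto_coeff_mult:
  fixes P Q :: "'b \<Rightarrow> 'a::real_normed_field poly"
  assumes "\<And>j. ((\<lambda>x. coeff (P x) j) \<longlongrightarrow> coeff P0 j) F"
    and "\<And>j. ((\<lambda>x. coeff (Q x) j) \<longlongrightarrow> coeff Q0 j) F"
  shows "((\<lambda>x. coeff (P x * Q x) j) \<longlongrightarrow> coeff (P0 * Q0) j) F"
  unfolding coeff_mult by (intro tendsto_sum tendsto_mult assms)

lemma tendsto_coeff_prod:
  fixes P :: "'b \<Rightarrow> 'c \<Rightarrow> 'a::real_normed_field poly"
  assumes "finite I" and "\<And>i j. i \<in> I \<Longrightarrow> ((\<lambda>x. coeff (P x i) j) \<longlongrightarrow> coeff (P0 i) j) F"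
  shows "((\<lambda>x. coeff (\<Prod>i\<in>I. P x i) j) \<longlongrightarrow> coeff (\<Prod>i\<in>I. P0 i) j) F"
  using assms by (induction I arbitrary: j rule: finite_induct) (simp_all add: tendsto_coeff_mult)

lemma tendsto_coeff_linear_poly:
  assumes "(r \<longlongrightarrow> r0) F"
  shows "((\<lambda>x. coeff [:1, r x:] j) \<longlongrightarrow> coeff [:1, r0:] j) F"
  using assms by (cases j) (auto simp: coeff_pCons split: nat.split)

lemma degree_prod_linear_le:
  fixes f :: "nat \<Rightarrow> 'a::comm_ring_1"
  shows "degree (\<Prod>i<n. [:1, f i:]) \<le> n"
proof -
  have "degree (\<Prod>i<n. [:1, f i:]) \<le> (\<Sum>i<n. degree [:1, f i:])"
    using degree_prod_sum_le[of "{..<n}" "\<lambda>i. [:1, f i:]"] by (simp add: o_def)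
  also have "\<dots> \<le> (\<Sum>i<n. 1)"
    by (intro sum_mono) simp
  finally show ?thesis
    by simp
qed

lemma degree_Theta_poly: "degree (Theta_poly m q a b) \<le> m - 1 + q"
  unfolding Theta_poly_def
  by (rule order.trans[OF degree_mult_le]) (intro add_mono degree_prod_linear_le)

lemma degree_RTheta_poly: "degree (RTheta_poly m q a b) \<le> m - 1 + q"
  unfolding RTheta_poly_def
  by (rule order.trans[OF degree_mult_le]) (metis add.commute add_mono degree_prod_linear_le)

text \<open>Summing up to a fixed bound instead of the degree makes the autocovariance continuous in the
  coefficients.\<close>

definition acov_upto :: "nat \<Rightarrow> complex poly \<Rightarrow> nat \<Rightarrow> complex" where
  "acov_upto N P k = (\<Sum>j\<le>N. coeff P j * coeff P (j + k))"

lemma ma_acov_eq_acov_upto: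
  assumes "degree P \<le> N"
  shows "ma_acov v P k = of_real v * acov_upto N P k"
proof -
  have "(\<Sum>j\<le>degree P. coeff P j * coeff P (j + k)) = (\<Sum>j\<le>N. coeff P j * coeff P (j + k))"
    by (rule sum.mono_neutral_left) (use assms in \<open>auto simp: coeff_eq_0\<close>)
  then show ?thesis
    by (simp add: ma_acov_def acov_upto_def)
qed

lemma ma_acov_smult_of_real: "ma_acov v (smult (of_real c) P) k = ma_acov (v * c\<^sup>2) P k"
  by (cases "c = 0")
    (simp_all add: ma_acov_def sum_distrib_left power2_eq_square mult_ac)

lemma acov_upto_eq_0:
  assumes "degree P \<le> N" and "N < k"
  shows "acov_upto N P k = 0"
  using assms by (auto simp: acov_upto_def coeff_eq_0 intro!: sum.neutral)

lemma tendsto_acov_upto: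
  assumes "\<And>j. ((\<lambda>x. coeff (P x) j) \<longlongrightarrow> coeff P0 j) F"
  shows "((\<lambda>x. acov_upto N (P x) k) \<longlongrightarrow> acov_upto N P0 k) F"
  unfolding acov_upto_def by (intro tendsto_sum tendsto_mult assms)

lemma asymp_equiv_ma_acov_iff:
  fixes P Q :: "real \<Rightarrow> complex poly" and v w :: "real \<Rightarrow> real"
  assumes deg: "\<And>x. degree (P x) \<le> N" "\<And>x. degree (Q x) \<le> N"
    and P: "\<And>j. ((\<lambda>x. coeff (P x) j) \<longlongrightarrow> coeff P0 j) (at_right 0)"
    and Q: "\<And>j. ((\<lambda>x. coeff (Q x) j) \<longlongrightarrow> coeff Q0 j) (at_right 0)"
    and v: "((\<lambda>x. of_real (v x) / of_real x ^ n) \<longlongrightarrow> c) (at_right 0)"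
    and w: "((\<lambda>x. of_real (w x) / of_real x ^ n) \<longlongrightarrow> d) (at_right 0)"
    and nz: "\<And>k. k \<le> N \<Longrightarrow> c * acov_upto N P0 k \<noteq> 0"
  shows "(\<forall>k. (\<lambda>x. ma_acov (v x) (P x) k) \<sim>[at_right 0] (\<lambda>x. ma_acov (w x) (Q x) k))
     \<longleftrightarrow> (\<forall>k\<le>N. c * acov_upto N P0 k = d * acov_upto N Q0 k)"
proof -
  have ma: "ma_acov (v x) (P x) k = of_real (v x) * acov_upto N (P x) k"
    "ma_acov (w x) (Q x) k = of_real (w x) * acov_upto N (Q x) k" for x k
    using deg by (simp_all add: ma_acov_eq_acov_upto)
  have high: "(\<lambda>x. ma_acov (v x) (P x) k) \<sim>[at_right 0] (\<lambda>x. ma_acov (w x) (Q x) k)"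
    if "N < k" for k
    using that deg by (simp add: ma acov_upto_eq_0)
  have low: "(\<lambda>x. ma_acov (v x) (P x) k) \<sim>[at_right 0] (\<lambda>x. ma_acov (w x) (Q x) k)
      \<longleftrightarrow> c * acov_upto N P0 k = d * acov_upto N Q0 k" if "k \<le> N" for k
  proof (rule asymp_equiv_iff_same_limit)
    show "\<forall>\<^sub>F x in at_right 0. (of_real x ^ n :: complex) \<noteq> 0"
      using eventually_at_right_less[of "0::real"] by eventually_elim simp
    show "((\<lambda>x. ma_acov (v x) (P x) k / of_real x ^ n) \<longlongrightarrow> c * acov_upto N P0 k) (at_right 0)"
      using tendsto_mult[OF v tendsto_acov_upto[OF P]] by (simp add: ma)
    show "((\<lambda>x. ma_acov (w x) (Q x) k / of_real x ^ n) \<longlongrightarrow> d * acov_upto N Q0 k) (at_right 0)"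
      using tendsto_mult[OF w tendsto_acov_upto[OF Q]] by (simp add: ma)
  qed (use nz that in auto)
  show ?thesis
    using high low by (meson not_le)
qed

lemma all_nat_le_1_iff: "(\<forall>k\<le>(1::nat). P k) \<longleftrightarrow> P 0 \<and> P 1"
  by (auto simp: le_Suc_eq)

lemma all_nat_le_2_iff: "(\<forall>k\<le>(2::nat). P k) \<longleftrightarrow> P 0 \<and> P 1 \<and> P 2"
  by (auto simp: le_Suc_eq eval_nat_numeral)

lemma acov_upto_linear_of_real:
  "acov_upto 1 [:1, of_real a:] 0 = of_real (1 + a\<^sup>2)"
  "acov_upto 1 [:1, of_real a:] 1 = of_real a"
  by (simp_all add: acov_upto_def power2_eq_square)

lemma acov_upto_quadratic_of_real:
  "acov_upto 2 ([:1, of_real a:] * [:1, of_real b:]) 0 = of_real (1 + (a + b)\<^sup>2 + (a * b)\<^sup>2)"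
  "acov_upto 2 ([:1, of_real a:] * [:1, of_real b:]) 1 = of_real ((a + b) * (1 + a * b))"
  "acov_upto 2 ([:1, of_real a:] * [:1, of_real b:]) 2 = of_real (a * b)"
  by (simp_all add: acov_upto_def power2_eq_square eval_nat_numeral algebra_simps)

lemma acov_upto_power_one_minus_X_nonzero:
  assumes "q \<le> 2" and "k \<le> q"
  shows "acov_upto q (\<Prod>i<q. [:1, -1:]) k \<noteq> 0"
proof -
  have "q = 0 \<or> q = 1 \<or> q = 2" "k = 0 \<or> k = 1 \<or> k = 2"
    using assms by auto
  then show ?thesis
    using assms by (auto simp: acov_upto_def eval_nat_numeral)
qed

section \<open>The limits of the moving-average zeros\<close>

lemma fps_nth_cosh: "fps_nth fps_cosh n = (if even n then 1 / fact n else 0)"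
  by (auto simp: fps_cosh_def)

lemma fps_nth_sinh: "fps_nth fps_sinh n = (if odd n then 1 / fact n else 0)"
  by (auto simp: fps_sinh_def)

lemma alpha_1_2_closed_form:
  assumes x: "x \<noteq> 0"
  shows "alpha 1 x = (x - 3) / (6 * x^2)"
    and "alpha 2 x = (x^2 - 15 * x + 30) / (120 * x^3)"
proof -
  define D where "D = fps_cosh - 1 + fps_const x"
  define G where "G = inverse D"
  have D: "fps_nth D 0 = x" "fps_nth D (Suc 0) = 0" "fps_nth D (Suc (Suc 0)) = 1/2"
    "fps_nth D (Suc (Suc (Suc 0))) = 0" "fps_nth D (Suc (Suc (Suc (Suc 0)))) = 1/24"
    by (simp_all add: D_def fps_nth_cosh)
  have S: "fps_nth fps_sinh 0 = 0" "fps_nth fps_sinh (Suc 0) = 1" "fps_nth fps_sinh (Suc (Suc 0)) = 0"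
    "fps_nth fps_sinh (Suc (Suc (Suc 0))) = 1/6" "fps_nth fps_sinh (Suc (Suc (Suc (Suc 0)))) = 0"
    "fps_nth fps_sinh (Suc (Suc (Suc (Suc (Suc 0))))) = 1/120"
    by (simp_all add: fps_nth_sinh)
  have "D * G = 1"
    unfolding G_def by (rule inverse_mult_eq_1') (simp add: D x)
  then have DG: "fps_nth (D * G) n = (if n = 0 then 1 else 0)" for n
    by simp
  have G0: "fps_nth G 0 = 1 / x"
    using DG[of 0] x by (simp add: fps_mult_nth D field_simps)
  have G1: "fps_nth G (Suc 0) = 0"
    using DG[of 1] x by (simp add: fps_mult_nth D)
  have G2: "fps_nth G (Suc (Suc 0)) = - 1 / (2 * x^2)"
    using DG[of 2] x by (simp add: fps_mult_nth D G0 G1 numeral_2_eq_2 field_simps add_eq_0_iff)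
  have G3: "fps_nth G (Suc (Suc (Suc 0))) = 0"
    using DG[of 3] x by (simp add: fps_mult_nth D G0 G1 G2 numeral_3_eq_3 field_simps)
  have G4: "fps_nth G (Suc (Suc (Suc (Suc 0)))) = 1 / (4 * x^3) - 1 / (24 * x^2)"
    using DG[of 4] x by (simp add: fps_mult_nth D G0 G1 G2 G3 eval_nat_numeral field_simps add_eq_0_iff)
  show "alpha 1 x = (x - 3) / (6 * x^2)"
    unfolding alpha_def D_def[symmetric] G_def[symmetric]
    using x by (simp add: fps_mult_nth S eval_nat_numeral G0 G1 G2 G3 field_simps)
  show "alpha 2 x = (x^2 - 15 * x + 30) / (120 * x^3)"
    unfolding alpha_def D_def[symmetric] G_def[symmetric]
    using x by (simp add: fps_mult_nth S eval_nat_numeral G0 G1 G2 G3 G4 field_simps)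
qed

lemma eta_lim_of_real:
  fixes x :: real
  assumes x: "2 < x"
  defines "e \<equiv> x - 1 - sqrt ((x - 1)\<^sup>2 - 1)"
  shows "eta_lim (of_real x) = of_real e" and "0 < e" and "e < 1" and "e\<^sup>2 + 1 = 2 * (x - 1) * e"
proof -
  have nonneg: "0 \<le> (x - 1)\<^sup>2 - 1"
    using x by (simp add: power2_eq_square algebra_simps)
  have "csqrt ((of_real x - 1)\<^sup>2 - 1) = of_real (sqrt ((x - 1)\<^sup>2 - 1))"
    using csqrt_of_real[OF nonneg] by simp
  then show "eta_lim (of_real x) = of_real e"
    unfolding eta_lim_def e_def by simp
  have "sqrt ((x - 1)\<^sup>2 - 1) < sqrt ((x - 1)\<^sup>2)"
    by (rule real_sqrt_less_mono) simp
  then show "0 < e"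
    using x by (simp add: e_def)
  have "(x - 2)\<^sup>2 < (x - 1)\<^sup>2 - 1"
    using x by (simp add: power2_eq_square algebra_simps)
  then have "x - 2 < sqrt ((x - 1)\<^sup>2 - 1)"
    by (rule real_less_rsqrt)
  then show "e < 1"
    by (simp add: e_def)
  show "e\<^sup>2 + 1 = 2 * (x - 1) * e"
    using real_sqrt_pow2[OF nonneg] by (simp add: e_def power2_eq_square algebra_simps)
qed

lemma eta_lim_3: "eta_lim 3 = of_real (2 - sqrt 3)"
  using eta_lim_of_real(1)[of 3] by (simp add: numeral_eq_Suc)

lemma two_minus_sqrt_3:
  "(2 - sqrt 3)\<^sup>2 = 4 * (2 - sqrt 3) - (1::real)" "0 < 2 - sqrt (3::real)" "2 - sqrt (3::real) < 1"
  using eta_lim_of_real(2-4)[of 3] by (simp_all add: numeral_eq_Suc power2_eq_square algebra_simps)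

lemma zeros_alpha_2:
  fixes z :: complex
  assumes "z \<noteq> 0" and "alpha 2 z = 0"
  obtains x where "z = of_real x" and "x\<^sup>2 - 15 * x + 30 = 0" and "2 < x"
proof -
  define a b where "a = (15 + sqrt 105) / (2::real)" and "b = (15 - sqrt 105) / (2::real)"
  have ab: "a + b = 15" "a * b = 30"
    by (simp_all add: a_def b_def field_simps power2_eq_square[symmetric])
  then have roots: "a\<^sup>2 - 15 * a + 30 = 0" "b\<^sup>2 - 15 * b + 30 = 0"
    by (simp_all add: ab[symmetric] power2_eq_square algebra_simps)
  have "(z - of_real a) * (z - of_real b) = z\<^sup>2 - of_real (a + b) * z + of_real (a * b)"
    by (simp add: power2_eq_square algebra_simps)
  also have "\<dots> = 0"
    using assms alpha_1_2_closed_form(2)[of z] by (simp add: ab)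
  finally have "z = of_real a \<or> z = of_real b"
    by simp
  moreover have "sqrt 105 < (11::real)"
    using real_sqrt_less_iff[of 105 "11\<^sup>2"] by simp
  then have "2 < a" "2 < b"
    by (simp_all add: a_def b_def add_pos_nonneg)
  ultimately show ?thesis
    using that roots by blast
qed

lemma chi_lim_2: "chi_lim 2 i h = (h - 1) / h"
  by (simp add: chi_lim_def)

lemma abs_chi_lim_2_less_1_iff:
  assumes "0 < h"
  shows "\<bar>chi_lim 2 i h\<bar> < 1 \<longleftrightarrow> 1 / 2 < h"
  using assms by (auto simp: chi_lim_2 abs_less_iff field_simps)

lemma neg_eta_lim_3_eq_chi_lim_2_iff:
  assumes "0 < h"
  shows "- (2 - sqrt 3) = chi_lim 2 i h \<longleftrightarrow> h = (3 + sqrt 3) / 6"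
proof -
  have nz: "3 - sqrt 3 \<noteq> (0::real)"
    using two_minus_sqrt_3(2) by linarith
  have "- (2 - sqrt 3) = chi_lim 2 i h \<longleftrightarrow> h * (3 - sqrt 3) = 1"
    using assms by (auto simp: chi_lim_2 field_simps)
  also have "\<dots> \<longleftrightarrow> h = 1 / (3 - sqrt 3)"
    using nz by (auto simp: field_simps)
  also have "1 / (3 - sqrt 3) = (3 + sqrt 3) / (6::real)"
    using nz by (simp add: field_simps algebra_simps)
  finally show ?thesis .
qed

lemma chi_lim_3_closed_form:
  fixes h :: real
  assumes h: "0 < h" "h < 1"
  defines "w \<equiv> sqrt (1 + 4 * (h * (1 - h)))"
  shows "w\<^sup>2 = 1 + 4 * (h * (1 - h))" and "1 < w"
    and "chi_lim 3 0 h = - 4 * (h - 1)\<^sup>2 / (w - 1)\<^sup>2" and "chi_lim 3 1 h = - 4 * (h - 1)\<^sup>2 / (w + 1)\<^sup>2"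
proof -
  have v: "0 < h * (1 - h)"
    using h by simp
  then show w2: "w\<^sup>2 = 1 + 4 * (h * (1 - h))"
    by (simp add: w_def)
  have "1 < w\<^sup>2" "0 \<le> w"
    using v w2 by (simp_all add: w_def)
  then show "1 < w"
    using power_less_imp_less_base[of 1 2 w] by simp
  have rad: "1 - 4 * (h - 1) * h = 1 + 4 * (h * (1 - h))"
    by (simp add: algebra_simps)
  have "2 * (h - 1) * h - 1 + w = - (w - 1)\<^sup>2 / 2" "2 * (h - 1) * h - 1 - w = - (w + 1)\<^sup>2 / 2"
    using w2 by (simp_all add: power2_eq_square algebra_simps)
  then show "chi_lim 3 0 h = - 4 * (h - 1)\<^sup>2 / (w - 1)\<^sup>2" "chi_lim 3 1 h = - 4 * (h - 1)\<^sup>2 / (w + 1)\<^sup>2"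
    unfolding chi_lim_def rad w_def[symmetric] by simp_all
qed

lemma chi_lim_3_mult_add:
  fixes h :: real
  assumes h: "0 < h" "h < 1"
  shows "chi_lim 3 0 h * chi_lim 3 1 h = (h - 1)\<^sup>2 / h\<^sup>2"
    and "chi_lim 3 0 h + chi_lim 3 1 h = - (1 + 2 * (h * (1 - h))) / h\<^sup>2"
proof -
  define w where "w = sqrt (1 + 4 * (h * (1 - h)))"
  note w = chi_lim_3_closed_form[OF h, folded w_def]
  have "h \<noteq> 0" "h - 1 \<noteq> 0"
    using h by auto
  have wv: "(w - 1) * (w + 1) = 4 * (h * (1 - h))"
    using w(1) by (simp add: power2_eq_square algebra_simps)
  have den: "((w - 1) * (w + 1))\<^sup>2 = 16 * h\<^sup>2 * (h - 1)\<^sup>2"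
    unfolding wv by (simp add: power2_eq_square algebra_simps)
  have "chi_lim 3 0 h * chi_lim 3 1 h = 16 * ((h - 1)\<^sup>2)\<^sup>2 / ((w - 1) * (w + 1))\<^sup>2"
    unfolding w(3,4) by (simp add: power_mult_distrib)
  also have "\<dots> = (h - 1)\<^sup>2 / h\<^sup>2"
    unfolding den using \<open>h \<noteq> 0\<close> \<open>h - 1 \<noteq> 0\<close> by (simp add: field_simps)
  finally show "chi_lim 3 0 h * chi_lim 3 1 h = (h - 1)\<^sup>2 / h\<^sup>2" .
  have "(w - 1)\<^sup>2 \<noteq> 0" "(w + 1)\<^sup>2 \<noteq> 0"
    using w(2) by auto
  then have "chi_lim 3 0 h + chi_lim 3 1 h
      = (- 4 * (h - 1)\<^sup>2 * (w + 1)\<^sup>2 + - 4 * (h - 1)\<^sup>2 * (w - 1)\<^sup>2) / ((w - 1)\<^sup>2 * (w + 1)\<^sup>2)"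
    unfolding w(3,4) by (rule add_frac_eq)
  also have "\<dots> = - 4 * (h - 1)\<^sup>2 * (2 * w\<^sup>2 + 2) / ((w - 1) * (w + 1))\<^sup>2"
    by (simp add: power2_eq_square algebra_simps)
  also have "\<dots> = - (1 + 2 * (h * (1 - h))) / h\<^sup>2"
    unfolding den w(1) using \<open>h \<noteq> 0\<close> \<open>h - 1 \<noteq> 0\<close> by (simp add: divide_simps)
  finally show "chi_lim 3 0 h + chi_lim 3 1 h = - (1 + 2 * (h * (1 - h))) / h\<^sup>2" .
qed

lemma one_le_abs_chi_lim_3_0:
  fixes h :: real
  assumes h: "0 < h" "h < 1"
  shows "1 \<le> \<bar>chi_lim 3 0 h\<bar>"
proof -
  define w where "w = sqrt (1 + 4 * (h * (1 - h)))"
  note w = chi_lim_3_closed_form[OF h, folded w_def]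
  have "(3 - 2 * h)\<^sup>2 - w\<^sup>2 = 8 * (1 - h)\<^sup>2"
    using w(1) by (simp add: power2_eq_square algebra_simps)
  then have "w\<^sup>2 \<le> (3 - 2 * h)\<^sup>2"
    using zero_le_power2[of "1 - h"] by linarith
  then have "w - 1 \<le> 2 * (1 - h)"
    using h by (smt (verit) power2_le_imp_le)
  then have "(w - 1)\<^sup>2 \<le> 4 * (h - 1)\<^sup>2"
    using w(2) power_mono[of "w - 1" "2 * (1 - h)" 2] by (simp add: power2_eq_square algebra_simps)
  then show ?thesis
    using w(2) by (simp add: w(3))
qed

section \<open>The limit equations for the autocovariances\<close>

text \<open>The equations for \<open>p - q = 2\<close> (with \<open>q = 0\<close> and \<open>q = 1\<close>) and for \<open>p - q = 3\<close>
  (where \<open>q = 0\<close>); the scalar factors are the values of \<open>c0\<close> and \<open>d0 h\<close> defined below.\<close>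

lemma limit_acov_eqs_2_0:
  fixes e h :: real
  assumes e: "e\<^sup>2 = 4 * e - 1" "0 < e" and h: "0 < h"
  defines "x \<equiv> (h - 1) / h"
  shows "\<forall>k\<le>1. of_real (1 / (6 * e)) * acov_upto 1 [:1, of_real e:] k \<noteq> 0"
    and "(\<forall>k\<le>1. of_real (1 / (6 * e)) * acov_upto 1 [:1, of_real e:] k
              = of_real (h\<^sup>2) * acov_upto 1 [:1, of_real (- x):] k)
         \<longleftrightarrow> h * (1 - h) = 1 / 6"
proof -
  show "\<forall>k\<le>1. of_real (1 / (6 * e)) * acov_upto 1 [:1, of_real e:] k \<noteq> 0"
    unfolding all_nat_le_1_iff acov_upto_linear_of_real of_real_mult[symmetric] of_real_eq_0_iff
    using e by (simp add: add_pos_nonneg)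
  have T: "1 / (6 * e) * (1 + e\<^sup>2) = 2 / 3" "1 / (6 * e) * e = 1 / 6"
    using e by (simp_all add: field_simps)
  have R: "h\<^sup>2 * (1 + (- x)\<^sup>2) = 1 - 2 * (h * (1 - h))" "h\<^sup>2 * (- x) = h * (1 - h)"
    using h by (simp_all add: x_def field_simps power2_eq_square)
  show "(\<forall>k\<le>1. of_real (1 / (6 * e)) * acov_upto 1 [:1, of_real e:] k
              = of_real (h\<^sup>2) * acov_upto 1 [:1, of_real (- x):] k)
         \<longleftrightarrow> h * (1 - h) = 1 / 6"
    unfolding all_nat_le_1_iff acov_upto_linear_of_real of_real_mult[symmetric] of_real_eq_iff T R
    by auto
qed

lemma limit_acov_eqs_2_1:
  fixes e h :: real
  assumes e: "e\<^sup>2 = 4 * e - 1" "0 < e" "e < 1" and h: "0 < h"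
  defines "x \<equiv> (h - 1) / h"
  shows "\<forall>k\<le>2. of_real (1 / (6 * e)) * acov_upto 2 ([:1, of_real e:] * [:1, of_real (- 1):]) k \<noteq> 0"
    and "(\<forall>k\<le>2. of_real (1 / (6 * e)) * acov_upto 2 ([:1, of_real e:] * [:1, of_real (- 1):]) k
              = of_real (h\<^sup>2) * acov_upto 2 ([:1, of_real (- 1):] * [:1, of_real (- x):]) k)
         \<longleftrightarrow> h * (1 - h) = 1 / 6"
proof -
  have "0 < (e - 1)\<^sup>2 + 4 * e"
    using e by (intro add_nonneg_pos) auto
  then show "\<forall>k\<le>2. of_real (1 / (6 * e)) * acov_upto 2 ([:1, of_real e:] * [:1, of_real (- 1):]) k \<noteq> 0"
    unfolding all_nat_le_2_iff acov_upto_quadratic_of_real of_real_mult[symmetric] of_real_eq_0_iff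
    using e by simp
  have T: "1 / (6 * e) * (1 + (e + - 1)\<^sup>2 + (e * - 1)\<^sup>2) = 1"
    "1 / (6 * e) * ((e + - 1) * (1 + e * - 1)) = - 1 / 3"
    "1 / (6 * e) * (e * - 1) = - 1 / 6"
    using e by (simp_all add: field_simps power2_eq_square algebra_simps)
  have R: "h\<^sup>2 * (1 + (- 1 + - x)\<^sup>2 + (- 1 * - x)\<^sup>2) = 2 - 6 * (h * (1 - h))"
    "h\<^sup>2 * ((- 1 + - x) * (1 + - 1 * - x)) = 4 * (h * (1 - h)) - 1"
    "h\<^sup>2 * (- 1 * - x) = - (h * (1 - h))"
    using h by (simp_all add: x_def field_simps power2_eq_square)
  show "(\<forall>k\<le>2. of_real (1 / (6 * e)) * acov_upto 2 ([:1, of_real e:] * [:1, of_real (- 1):]) k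
              = of_real (h\<^sup>2) * acov_upto 2 ([:1, of_real (- 1):] * [:1, of_real (- x):]) k)
         \<longleftrightarrow> h * (1 - h) = 1 / 6"
    unfolding all_nat_le_2_iff acov_upto_quadratic_of_real of_real_mult[symmetric] of_real_eq_iff T R
    by auto
qed

lemma acov_terms_eta_3:
  fixes e0 e1 t0 t1 :: real
  assumes e: "e0\<^sup>2 + 1 = 2 * t0 * e0" "e1\<^sup>2 + 1 = 2 * t1 * e1" and t: "t0 + t1 = 13" "t0 * t1 = 16"
  shows "1 + (e0 + e1)\<^sup>2 + (e0 * e1)\<^sup>2 = 66 * (e0 * e1)"
    and "(e0 + e1) * (1 + e0 * e1) = 26 * (e0 * e1)"
proof -
  have "1 + (e0 + e1)\<^sup>2 + (e0 * e1)\<^sup>2 = (e0\<^sup>2 + 1) * (e1\<^sup>2 + 1) + 2 * (e0 * e1)"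
    by (simp add: power2_eq_square algebra_simps)
  also have "\<dots> = (4 * (t0 * t1) + 2) * (e0 * e1)"
    unfolding e by (simp add: algebra_simps)
  finally show "1 + (e0 + e1)\<^sup>2 + (e0 * e1)\<^sup>2 = 66 * (e0 * e1)"
    using t by simp
  have "(e0 + e1) * (1 + e0 * e1) = e1 * (e0\<^sup>2 + 1) + e0 * (e1\<^sup>2 + 1)"
    by (simp add: power2_eq_square algebra_simps)
  also have "\<dots> = 2 * (t0 + t1) * (e0 * e1)"
    unfolding e by (simp add: algebra_simps)
  finally show "(e0 + e1) * (1 + e0 * e1) = 26 * (e0 * e1)"
    using t by simp
qed

lemma acov_terms_chi_3:
  fixes a b h :: real
  assumes h: "h \<noteq> 0"
    and ab: "a * b = (h - 1)\<^sup>2 / h\<^sup>2" "a + b = - (1 + 2 * (h * (1 - h))) / h\<^sup>2"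
  defines "v \<equiv> h * (1 - h)"
  shows "(h\<^sup>2 / 2)\<^sup>2 * (1 + (- a + - b)\<^sup>2 + (- a * - b)\<^sup>2) = (2 + 6 * v\<^sup>2) / 4"
    and "(h\<^sup>2 / 2)\<^sup>2 * ((- a + - b) * (1 + - a * - b)) = (1 - 4 * v\<^sup>2) / 4"
    and "(h\<^sup>2 / 2)\<^sup>2 * (- a * - b) = v\<^sup>2 / 4"
proof -
  have "(h\<^sup>2 / 2)\<^sup>2 * (1 + (a + b)\<^sup>2 + (a * b)\<^sup>2) = (h ^ 4 + (1 + 2 * v)\<^sup>2 + (h - 1) ^ 4) / 4"
    unfolding ab v_def using h by (simp add: field_simps power2_eq_square power4_eq_xxxx)
  also have "h ^ 4 + (1 + 2 * v)\<^sup>2 + (h - 1) ^ 4 = 2 + 6 * v\<^sup>2"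
    unfolding v_def by (simp add: power2_eq_square power4_eq_xxxx algebra_simps)
  finally show "(h\<^sup>2 / 2)\<^sup>2 * (1 + (- a + - b)\<^sup>2 + (- a * - b)\<^sup>2) = (2 + 6 * v\<^sup>2) / 4"
    by (simp add: power2_eq_square algebra_simps)
  have "1 + a * b = (1 - 2 * v) / h\<^sup>2"
    unfolding ab v_def using h by (simp add: field_simps power2_eq_square)
  moreover have "- a + - b = (1 + 2 * v) / h\<^sup>2"
    using ab(2) h by (simp add: v_def field_simps)
  ultimately have "(- a + - b) * (1 + - a * - b) = (1 + 2 * v) / h\<^sup>2 * ((1 - 2 * v) / h\<^sup>2)"
    by simp
  then show "(h\<^sup>2 / 2)\<^sup>2 * ((- a + - b) * (1 + - a * - b)) = (1 - 4 * v\<^sup>2) / 4"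
    using h by (simp add: field_simps power2_eq_square)
  have "(h\<^sup>2 / 2)\<^sup>2 * (- a * - b) = (h\<^sup>2 / 2)\<^sup>2 * ((h - 1)\<^sup>2 / h\<^sup>2)"
    using ab(1) by simp
  also have "\<dots> = v\<^sup>2 / 4"
    using h by (simp add: v_def field_simps power2_eq_square)
  finally show "(h\<^sup>2 / 2)\<^sup>2 * (- a * - b) = v\<^sup>2 / 4" .
qed

lemma limit_acov_eqs_3:
  fixes e0 e1 t0 t1 a b h :: real
  assumes e: "0 < e0" "0 < e1" "e0\<^sup>2 + 1 = 2 * t0 * e0" "e1\<^sup>2 + 1 = 2 * t1 * e1"
    and t: "t0 + t1 = 13" "t0 * t1 = 16"
    and h: "h \<noteq> 0"
    and ab: "a * b = (h - 1)\<^sup>2 / h\<^sup>2" "a + b = - (1 + 2 * (h * (1 - h))) / h\<^sup>2"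
  shows "\<forall>k\<le>2. of_real (1 / (120 * (e0 * e1))) * acov_upto 2 ([:1, of_real e0:] * [:1, of_real e1:]) k \<noteq> 0"
    and "(\<forall>k\<le>2. of_real (1 / (120 * (e0 * e1))) * acov_upto 2 ([:1, of_real e0:] * [:1, of_real e1:]) k
              = of_real ((h\<^sup>2 / 2)\<^sup>2) * acov_upto 2 ([:1, of_real (- a):] * [:1, of_real (- b):]) k)
         \<longleftrightarrow> (h * (1 - h))\<^sup>2 = 1 / 30"
proof -
  have "e0 * e1 \<noteq> 0"
    using e by auto
  then have T: "1 / (120 * (e0 * e1)) * (1 + (e0 + e1)\<^sup>2 + (e0 * e1)\<^sup>2) = 66 / 120"
    "1 / (120 * (e0 * e1)) * ((e0 + e1) * (1 + e0 * e1)) = 26 / 120"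
    "1 / (120 * (e0 * e1)) * (e0 * e1) = 1 / 120"
    unfolding acov_terms_eta_3[OF e(3,4) t] by simp_all
  show "\<forall>k\<le>2. of_real (1 / (120 * (e0 * e1))) * acov_upto 2 ([:1, of_real e0:] * [:1, of_real e1:]) k \<noteq> 0"
    unfolding all_nat_le_2_iff acov_upto_quadratic_of_real of_real_mult[symmetric] of_real_eq_0_iff T
    by simp
  show "(\<forall>k\<le>2. of_real (1 / (120 * (e0 * e1))) * acov_upto 2 ([:1, of_real e0:] * [:1, of_real e1:]) k
              = of_real ((h\<^sup>2 / 2)\<^sup>2) * acov_upto 2 ([:1, of_real (- a):] * [:1, of_real (- b):]) k)
         \<longleftrightarrow> (h * (1 - h))\<^sup>2 = 1 / 30"
    unfolding all_nat_le_2_iff acov_upto_quadratic_of_real of_real_mult[symmetric] of_real_eq_iff T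
      acov_terms_chi_3[OF h ab]
    by auto
qed

lemma mult_one_minus_eq_1_6_iff:
  fixes h :: real
  shows "h * (1 - h) = 1 / 6 \<longleftrightarrow> h = (3 + sqrt 3) / 6 \<or> h = (3 - sqrt 3) / 6"
proof -
  have "h * (1 - h) = 1 / 6 \<longleftrightarrow> (6 * h - 3)\<^sup>2 = (sqrt 3)\<^sup>2"
    by (simp add: power2_eq_square algebra_simps) linarith
  also have "\<dots> \<longleftrightarrow> 6 * h - 3 = sqrt 3 \<or> 6 * h - 3 = - sqrt 3"
    by (rule power2_eq_iff)
  also have "\<dots> \<longleftrightarrow> h = (3 + sqrt 3) / 6 \<or> h = (3 - sqrt 3) / 6"
    by auto
  finally show ?thesis .
qed

lemma larger_root_1_6_iff:
  fixes h :: real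
  assumes "h = (3 + sqrt 3) / 6 \<or> h = (3 - sqrt 3) / 6"
  shows "h = (3 + sqrt 3) / 6 \<longleftrightarrow> 1 / 2 < h"
  using assms
proof
  assume h: "h = (3 + sqrt 3) / 6"
  have "1 / 2 < h"
    unfolding h by (simp add: field_simps)
  with h show ?thesis
    by blast
next
  assume h: "h = (3 - sqrt 3) / 6"
  have "\<not> 1 / 2 < h" "h \<noteq> (3 + sqrt 3) / 6"
    unfolding h by (simp_all add: field_simps)
  then show ?thesis
    by blast
qed

lemma square_mult_one_minus_eq_1_30_iff:
  fixes h :: real
  assumes "0 < h" "h < 1"
  shows "(h * (1 - h))\<^sup>2 = 1 / 30 \<longleftrightarrow>
    h = (15 + sqrt (225 - 30 * sqrt 30)) / 30 \<or> h = (15 - sqrt (225 - 30 * sqrt 30)) / 30"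
proof -
  have "0 < h * (1 - h)"
    using assms by simp
  moreover have "(sqrt 30 / 30)\<^sup>2 = (1 / 30 :: real)"
    by (simp add: power_divide)
  ultimately have "(h * (1 - h))\<^sup>2 = 1 / 30 \<longleftrightarrow> h * (1 - h) = sqrt 30 / 30"
    by (metis power2_eq_iff_nonneg less_imp_le real_sqrt_ge_zero divide_nonneg_pos zero_le_numeral
        zero_less_numeral)
  also have "\<dots> \<longleftrightarrow> (30 * h - 15)\<^sup>2 = 225 - 30 * sqrt 30"
    by (simp add: power2_eq_square algebra_simps) linarith
  also have "\<dots> \<longleftrightarrow> (30 * h - 15)\<^sup>2 = (sqrt (225 - 30 * sqrt 30))\<^sup>2"
  proof -
    have "sqrt 30 \<le> sqrt ((15 / 2)\<^sup>2)"
      by (simp only: real_sqrt_le_iff) (simp add: power2_eq_square)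
    then show ?thesis
      by simp
  qed
  also have "\<dots> \<longleftrightarrow> 30 * h - 15 = sqrt (225 - 30 * sqrt 30) \<or> 30 * h - 15 = - sqrt (225 - 30 * sqrt 30)"
    by (rule power2_eq_iff)
  also have "\<dots> \<longleftrightarrow> h = (15 + sqrt (225 - 30 * sqrt 30)) / 30 \<or> h = (15 - sqrt (225 - 30 * sqrt 30)) / 30"
    by auto
  finally show ?thesis .
qed

section \<open>The sampled CARMA setting\<close>

locale sampled_carma_asymptotics =
  fixes p q :: nat and \<sigma> :: real
    and \<mu> \<xi> :: "nat \<Rightarrow> complex"
    and \<eta> \<zeta> :: "real \<Rightarrow> nat \<Rightarrow> complex" and \<sigma>2 :: "real \<Rightarrow> real"
    and \<theta>0 :: "real \<Rightarrow> real \<Rightarrow> real"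
    and \<rho> chiR :: "real \<Rightarrow> real \<Rightarrow> nat \<Rightarrow> complex"
  assumes pq: "q < p" "p \<le> 3" and sig: "\<sigma> > 0"
    and mu_nz: "\<forall>k<q. Re (\<mu> k) \<noteq> 0"
    and xi: "bij_betw \<xi> {..<p - q - 1} {x. x \<noteq> 0 \<and> alpha (p - q - 1) x = 0}"
    and eta: "\<forall>i<p - q - 1. ((\<lambda>\<Delta>. \<eta> \<Delta> i) \<longlongrightarrow> eta_lim (\<xi> i)) (at_right 0)"
    and zeta: "\<forall>k<q. ((\<lambda>\<Delta>. (\<zeta> \<Delta> k - (1 - of_real (sgn (Re (\<mu> k))) * \<mu> k * of_real \<Delta>)) / of_real \<Delta>)
                      \<longlongrightarrow> 0) (at_right 0)"
    and sig2: "(\<lambda>\<Delta>. complex_of_real (\<sigma>2 \<Delta>)) \<sim>[at_right 0]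
               (\<lambda>\<Delta>. of_real (\<sigma>\<^sup>2 * \<Delta> ^ (2 * (p - q) - 1) / fact (2 * (p - q) - 1))
                      / (\<Prod>i<p - q - 1. eta_lim (\<xi> i)))"
    and theta0: "\<forall>h\<in>{0<..<1}. (\<lambda>\<Delta>. \<theta>0 \<Delta> h) \<sim>[at_right 0]
                     (\<lambda>\<Delta>. \<sigma> * (h * \<Delta>) ^ (p - q - 1) / fact (p - q - 1))"
    and rho: "\<forall>h\<in>{0<..<1}. \<forall>k<q.
                ((\<lambda>\<Delta>. (\<rho> \<Delta> h k - (1 - of_real \<Delta> * \<mu> k)) / of_real \<Delta>) \<longlongrightarrow> 0) (at_right 0)"
    and chi: "\<forall>h\<in>{0<..<1}. \<forall>i<p - q - 1.
                ((\<lambda>\<Delta>. chiR \<Delta> h i) \<longlongrightarrow> of_real (chi_lim (p - q) i h)) (at_right 0)"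
begin

abbreviation m :: nat where "m \<equiv> p - q"

text \<open>\<open>eta0\<close>, \<open>T0\<close> and \<open>R0 h\<close> are the limits of \<open>\<eta>\<close> and of the two MA polynomials, and
  \<open>\<sigma>\<^sup>2 c0 \<Delta>^(2m-1)\<close>, \<open>\<sigma>\<^sup>2 d0 h \<Delta>^(2m-1)\<close> are the leading terms of \<open>\<sigma>2\<close> and of
  \<open>\<Delta> \<theta>0\<^sup>2\<close>, the variances of the two noises.\<close>

definition eta0 :: "nat \<Rightarrow> complex" where "eta0 i = eta_lim (\<xi> i)"

definition T0 :: "complex poly" where "T0 = Theta_poly m q eta0 (\<lambda>_. 1)"

definition R0 :: "real \<Rightarrow> complex poly" where
  "R0 h = RTheta_poly m q (\<lambda>_. 1) (\<lambda>i. of_real (chi_lim m i h))"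

definition c0 :: complex where "c0 = 1 / (of_real (fact (2 * m - 1)) * (\<Prod>i<m - 1. eta0 i))"

definition d0 :: "real \<Rightarrow> complex" where "d0 h = of_real ((h ^ (m - 1) / fact (m - 1))\<^sup>2)"

definition acov_match :: "real \<Rightarrow> bool" where
  "acov_match h \<longleftrightarrow>
     (\<forall>k. (\<lambda>\<Delta>. ma_acov (\<sigma>2 \<Delta>) (Theta_poly (p - q) q (\<eta> \<Delta>) (\<zeta> \<Delta>)) k) \<sim>[at_right 0]
          (\<lambda>\<Delta>. ma_acov \<Delta> (smult (of_real (\<theta>0 \<Delta> h)) (RTheta_poly (p - q) q (\<rho> \<Delta> h) (chiR \<Delta> h))) k))"

definition ma_match :: "real \<Rightarrow> bool" where
  "ma_match h \<longleftrightarrow>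
     (\<forall>k<q. ((\<lambda>\<Delta>. (\<zeta> \<Delta> k - \<rho> \<Delta> h k) / of_real \<Delta>) \<longlongrightarrow> 0) (at_right 0)) \<and>
     (\<exists>\<pi>. \<pi> permutes {..<p - q - 1} \<and>
        (\<forall>i<p - q - 1. ((\<lambda>\<Delta>. - \<eta> \<Delta> i - chiR \<Delta> h (\<pi> i)) \<longlongrightarrow> 0) (at_right 0)))"

definition chi_match :: "real \<Rightarrow> bool" where
  "chi_match h \<longleftrightarrow> (\<exists>\<pi>. \<pi> permutes {..<m - 1} \<and> (\<forall>i<m - 1. - eta0 i = of_real (chi_lim m (\<pi> i) h)))"

lemma tendsto_sigma2:
  "((\<lambda>x. of_real (\<sigma>2 x) / of_real x ^ (2 * m - 1)) \<longlongrightarrow> of_real (\<sigma>\<^sup>2) * c0) (at_right 0)"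
proof (rule tendsto_div_power_if_asymp_equiv)
  have "(\<lambda>x. of_real (\<sigma>\<^sup>2 * x ^ (2 * m - 1) / fact (2 * m - 1)) / (\<Prod>i<m - 1. eta_lim (\<xi> i)))
      = (\<lambda>x. of_real (\<sigma>\<^sup>2) * c0 * of_real x ^ (2 * m - 1))"
    by (simp add: c0_def eta0_def field_simps)
  then show "(\<lambda>x. complex_of_real (\<sigma>2 x)) \<sim>[at_right 0] (\<lambda>x. of_real (\<sigma>\<^sup>2) * c0 * of_real x ^ (2 * m - 1))"
    using sig2 by simp
qed

lemma tendsto_theta0:
  assumes h: "h \<in> {0<..<1}"
  shows "((\<lambda>x. of_real (x * \<theta>0 x h ^ 2) / of_real x ^ (2 * m - 1)) \<longlongrightarrow> of_real (\<sigma>\<^sup>2) * d0 h) (at_right 0)"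
proof -
  define r where "r = m - 1"
  have "(\<lambda>x. \<theta>0 x h) \<sim>[at_right 0] (\<lambda>x. \<sigma> * (h * x) ^ r / fact r)"
    using theta0 h by (simp add: r_def)
  also have "(\<lambda>x. \<sigma> * (h * x) ^ r / fact r) = (\<lambda>x. \<sigma> * h ^ r / fact r * of_real x ^ r)"
    by (simp add: power_mult_distrib mult_ac)
  finally have "(\<lambda>x. \<theta>0 x h) \<sim>[at_right 0] (\<lambda>x. \<sigma> * h ^ r / fact r * of_real x ^ r)" .
  from tendsto_div_power_if_asymp_equiv[OF this]
  have "((\<lambda>x. \<theta>0 x h / x ^ r) \<longlongrightarrow> \<sigma> * h ^ r / fact r) (at_right 0)"
    by simp
  then have L: "((\<lambda>x. complex_of_real ((\<theta>0 x h / x ^ r)\<^sup>2)) \<longlongrightarrow> of_real ((\<sigma> * h ^ r / fact r)\<^sup>2)) (at_right 0)"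
    by (intro tendsto_of_real tendsto_power)
  have exponent: "2 * m - 1 = 2 * r + 1"
    using pq by (simp add: r_def)
  have limit: "of_real (\<sigma>\<^sup>2) * d0 h = of_real ((\<sigma> * h ^ r / fact r)\<^sup>2)"
    by (simp add: d0_def r_def power_mult_distrib power_divide)
  show ?thesis
    unfolding exponent limit
    by (rule Lim_transform_eventually[OF L])
      (use eventually_at_right_less[of 0] in \<open>eventually_elim, simp add: field_simps power2_eq_square power_add power_mult\<close>)
qed

lemma tendsto_coeff_Theta_poly:
  "((\<lambda>x. coeff (Theta_poly m q (\<eta> x) (\<zeta> x)) j) \<longlongrightarrow> coeff T0 j) (at_right 0)"
proof -
  have "((\<lambda>x. \<zeta> x k) \<longlongrightarrow> 1) (at_right 0)" if "k < q" for k
    using zeta that by (intro tendsto_1_if_first_order) auto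
  then show ?thesis
    unfolding Theta_poly_def T0_def
    by (intro tendsto_coeff_mult tendsto_coeff_prod tendsto_coeff_linear_poly tendsto_minus)
      (auto simp: eta0_def intro: eta[rule_format])
qed

lemma tendsto_coeff_RTheta_poly:
  assumes h: "h \<in> {0<..<1}"
  shows "((\<lambda>x. coeff (RTheta_poly m q (\<rho> x h) (chiR x h)) j) \<longlongrightarrow> coeff (R0 h) j) (at_right 0)"
proof -
  have "((\<lambda>x. \<rho> x h k) \<longlongrightarrow> 1) (at_right 0)" if "k < q" for k
    using rho h that by (intro tendsto_1_if_first_order[where a = "\<mu> k"]) (auto simp: mult.commute)
  then show ?thesis
    unfolding RTheta_poly_def R0_def
    by (intro tendsto_coeff_mult tendsto_coeff_prod tendsto_coeff_linear_poly tendsto_minus)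
      (use h in \<open>auto intro: chi[rule_format]\<close>)
qed

lemma acov_match_iff_limit_eqs:
  assumes h: "h \<in> {0<..<1}" and nz: "\<forall>k\<le>p - 1. c0 * acov_upto (p - 1) T0 k \<noteq> 0"
  shows "acov_match h \<longleftrightarrow> (\<forall>k\<le>p - 1. c0 * acov_upto (p - 1) T0 k = d0 h * acov_upto (p - 1) (R0 h) k)"
proof -
  have deg: "m - 1 + q = p - 1"
    using pq by simp
  have "acov_match h \<longleftrightarrow>
      (\<forall>k. (\<lambda>x. ma_acov (\<sigma>2 x) (Theta_poly m q (\<eta> x) (\<zeta> x)) k) \<sim>[at_right 0]
           (\<lambda>x. ma_acov (x * \<theta>0 x h ^ 2) (RTheta_poly m q (\<rho> x h) (chiR x h)) k))"
    by (simp add: acov_match_def ma_acov_smult_of_real)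
  also have "\<dots> \<longleftrightarrow> (\<forall>k\<le>p - 1. of_real (\<sigma>\<^sup>2) * c0 * acov_upto (p - 1) T0 k
                             = of_real (\<sigma>\<^sup>2) * d0 h * acov_upto (p - 1) (R0 h) k)"
  proof (rule asymp_equiv_ma_acov_iff[OF _ _ tendsto_coeff_Theta_poly tendsto_coeff_RTheta_poly[OF h]
        tendsto_sigma2 tendsto_theta0[OF h]])
    show "degree (Theta_poly m q (\<eta> x) (\<zeta> x)) \<le> p - 1"
      "degree (RTheta_poly m q (\<rho> x h) (chiR x h)) \<le> p - 1" for x
      using degree_Theta_poly degree_RTheta_poly deg by metis+
  qed (use sig nz in auto)
  also have "\<dots> \<longleftrightarrow> (\<forall>k\<le>p - 1. c0 * acov_upto (p - 1) T0 k = d0 h * acov_upto (p - 1) (R0 h) k)"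
    using sig by (simp add: mult.assoc)
  finally show ?thesis .
qed

lemma ma_match_iff:
  assumes h: "h \<in> {0<..<1}"
  shows "ma_match h \<longleftrightarrow> (\<forall>k<q. 0 < Re (\<mu> k)) \<and> chi_match h"
proof -
  have "((\<lambda>x. (\<zeta> x k - \<rho> x h k) / of_real x) \<longlongrightarrow> 0) (at_right 0) \<longleftrightarrow> 0 < Re (\<mu> k)"
    if k: "k < q" for k
  proof -
    have "((\<lambda>x. (\<zeta> x k - \<rho> x h k) / of_real x) \<longlongrightarrow> 0) (at_right 0)
        \<longleftrightarrow> of_real (sgn (Re (\<mu> k))) * \<mu> k = \<mu> k"
      by (rule first_order_diff_tendsto_0_iff) (use zeta rho h k in \<open>auto simp: mult.commute\<close>)
    also have "\<dots> \<longleftrightarrow> 0 < Re (\<mu> k)"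
      using mu_nz k by (cases "0 < Re (\<mu> k)") (auto simp: sgn_if complex_eq_iff)
    finally show ?thesis .
  qed
  moreover have "(\<forall>i<m - 1. ((\<lambda>x. - \<eta> x i - chiR x h (\<pi> i)) \<longlongrightarrow> 0) (at_right 0))
      \<longleftrightarrow> (\<forall>i<m - 1. - eta0 i = of_real (chi_lim m (\<pi> i) h))" if "\<pi> permutes {..<m - 1}" for \<pi>
  proof -
    have "((\<lambda>x. - \<eta> x i - chiR x h (\<pi> i)) \<longlongrightarrow> 0) (at_right 0)
        \<longleftrightarrow> - eta0 i = of_real (chi_lim m (\<pi> i) h)" if "i < m - 1" for i
      using permutes_in_image[OF \<open>\<pi> permutes _\<close>, of i] eta chi h \<open>i < m - 1\<close>
      by (intro tendsto_neg_diff_0_iff) (auto simp: eta0_def)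
    then show ?thesis
      by blast
  qed
  ultimately show ?thesis
    unfolding ma_match_def chi_match_def by blast
qed

lemma acov_match_if_m1:
  assumes m: "m = 1" and h: "h \<in> {0<..<1}"
  shows "acov_match h"
proof -
  have "p - 1 = q" "q \<le> 2"
    using pq m by auto
  moreover have "c0 = 1" "d0 h = 1" "R0 h = T0" "T0 = (\<Prod>i<q. [:1, -1:])"
    using m by (simp_all add: c0_def d0_def R0_def T0_def Theta_poly_def RTheta_poly_def)
  ultimately show ?thesis
    using acov_match_iff_limit_eqs[OF h] acov_upto_power_one_minus_X_nonzero by simp
qed

lemma chi_match_if_m1: "m = 1 \<Longrightarrow> chi_match h"
  by (auto simp: chi_match_def intro!: exI[of _ id] permutes_id)

lemma eta0_0_if_m2:
  assumes "m = 2"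
  shows "eta0 0 = of_real (2 - sqrt 3)"
proof -
  have "\<xi> 0 \<noteq> 0" "alpha 1 (\<xi> 0) = 0"
    using bij_betw_apply[OF xi, of 0] assms by auto
  then have "\<xi> 0 = 3"
    using alpha_1_2_closed_form(1)[of "\<xi> 0"] by simp
  then show ?thesis
    by (simp add: eta0_def eta_lim_3)
qed

lemma acov_match_iff_m2:
  assumes m: "m = 2" and h: "h \<in> {0<..<1}"
  shows "acov_match h \<longleftrightarrow> h * (1 - h) = 1 / 6"
proof -
  define e where "e = 2 - sqrt (3::real)"
  have e: "e\<^sup>2 = 4 * e - 1" "0 < e" "e < 1"
    using two_minus_sqrt_3 by (simp_all add: e_def)
  have eta0_0: "eta0 0 = of_real e"
    using eta0_0_if_m2[OF m] by (simp add: e_def)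
  have c0: "c0 = of_real (1 / (6 * e))" and d0: "d0 h = of_real (h\<^sup>2)"
    using m eta0_0 by (simp_all add: c0_def d0_def fact_numeral)
  have "h > 0"
    using h by simp
  consider "q = 0" | "q = 1"
    using pq m by linarith
  then show ?thesis
  proof cases
    case 1
    have "p - 1 = 1" "T0 = [:1, of_real e:]" "R0 h = [:1, of_real (- ((h - 1) / h)):]"
      unfolding T0_def R0_def Theta_poly_def RTheta_poly_def using 1 m eta0_0 by (simp_all add: chi_lim_2)
    then show ?thesis
      using acov_match_iff_limit_eqs[OF h] limit_acov_eqs_2_0[OF e(1,2) \<open>h > 0\<close>] by (simp add: c0 d0)
  next
    case 2
    have "p - 1 = 2" "T0 = [:1, of_real e:] * [:1, of_real (- 1):]"
      "R0 h = [:1, of_real (- 1):] * [:1, of_real (- ((h - 1) / h)):]"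
      unfolding T0_def R0_def Theta_poly_def RTheta_poly_def using 2 m eta0_0 by (simp_all add: chi_lim_2)
    then show ?thesis
      using acov_match_iff_limit_eqs[OF h] limit_acov_eqs_2_1[OF e \<open>h > 0\<close>] by (simp add: c0 d0)
  qed
qed

lemma chi_match_iff_m2:
  assumes m: "m = 2" and h: "h \<in> {0<..<1}"
  shows "chi_match h \<longleftrightarrow> h = (3 + sqrt 3) / 6"
proof -
  have "chi_match h \<longleftrightarrow> - eta0 0 = of_real (chi_lim 2 0 h)"
  proof
    assume "chi_match h"
    then obtain \<pi> where "\<pi> permutes {..<1}" "- eta0 0 = of_real (chi_lim 2 (\<pi> 0) h)"
      using m by (auto simp: chi_match_def)
    then show "- eta0 0 = of_real (chi_lim 2 0 h)"
      by (simp add: chi_lim_2)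
  qed (use m in \<open>auto simp: chi_match_def intro!: exI[of _ id] permutes_id\<close>)
  also have "\<dots> \<longleftrightarrow> - (2 - sqrt 3) = chi_lim 2 0 h"
    unfolding eta0_0_if_m2[OF m] by (metis of_real_eq_iff of_real_minus)
  also have "\<dots> \<longleftrightarrow> h = (3 + sqrt 3) / 6"
    using h by (intro neg_eta_lim_3_eq_chi_lim_2_iff) simp
  finally show ?thesis .
qed

lemma eta0_if_m3:
  assumes m: "m = 3"
  obtains e0 e1 t0 t1 where "eta0 0 = of_real e0" "eta0 1 = of_real e1"
    "0 < e0" "e0 < 1" "0 < e1" "e1 < 1" "e0\<^sup>2 + 1 = 2 * t0 * e0" "e1\<^sup>2 + 1 = 2 * t1 * e1"
    "t0 + t1 = 13" "t0 * t1 = 16"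
proof -
  have "\<xi> i \<noteq> 0" "alpha 2 (\<xi> i) = 0" if "i < 2" for i
    using bij_betw_apply[OF xi, of i] that m by auto
  then obtain x0 x1 where x: "\<xi> 0 = of_real x0" "\<xi> 1 = of_real x1" "2 < x0" "2 < x1"
    and roots: "x0\<^sup>2 - 15 * x0 + 30 = 0" "x1\<^sup>2 - 15 * x1 + 30 = 0"
    using zeros_alpha_2 by (metis one_less_numeral_iff semiring_norm(76) zero_less_numeral)
  have "\<xi> 0 \<noteq> \<xi> 1"
    using inj_onD[OF bij_betw_imp_inj_on[OF xi], of 0 1] m by auto
  then have "x0 \<noteq> x1"
    using x by auto
  moreover have "(x0 - x1) * (x0 + x1 - 15) = 0"
    using roots by (simp add: power2_eq_square algebra_simps)
  ultimately have sum: "x0 + x1 = 15"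
    by simp
  then have "x1 = 15 - x0"
    by simp
  then have prod: "x0 * x1 = 30"
    using roots(1) by (simp add: power2_eq_square right_diff_distrib)
  define e0 e1 where "e0 = x0 - 1 - sqrt ((x0 - 1)\<^sup>2 - 1)" and "e1 = x1 - 1 - sqrt ((x1 - 1)\<^sup>2 - 1)"
  show ?thesis
  proof (rule that[of e0 e1 "x0 - 1" "x1 - 1"])
    show "eta0 0 = of_real e0" "eta0 1 = of_real e1"
      using eta_lim_of_real(1) x by (simp_all add: eta0_def e0_def e1_def)
    show "0 < e0" "e0 < 1" "e0\<^sup>2 + 1 = 2 * (x0 - 1) * e0"
      using eta_lim_of_real(2-4)[OF x(3)] by (simp_all add: e0_def)
    show "0 < e1" "e1 < 1" "e1\<^sup>2 + 1 = 2 * (x1 - 1) * e1"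
      using eta_lim_of_real(2-4)[OF x(4)] by (simp_all add: e1_def)
    show "x0 - 1 + (x1 - 1) = 13" "(x0 - 1) * (x1 - 1) = 16"
      using sum prod by (simp_all add: algebra_simps)
  qed
qed

lemma acov_match_iff_m3:
  assumes m: "m = 3" and h: "h \<in> {0<..<1}"
  shows "acov_match h \<longleftrightarrow> (h * (1 - h))\<^sup>2 = 1 / 30"
proof -
  obtain e0 e1 t0 t1 where eta0_eq: "eta0 0 = of_real e0" "eta0 1 = of_real e1"
    and e: "0 < e0" "e0 < 1" "0 < e1" "e1 < 1" "e0\<^sup>2 + 1 = 2 * t0 * e0" "e1\<^sup>2 + 1 = 2 * t1 * e1"
    and t: "t0 + t1 = 13" "t0 * t1 = 16"
    using eta0_if_m3[OF m] by blast
  have "q = 0" "p - 1 = 2"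
    using pq m by auto
  have c0: "c0 = of_real (1 / (120 * (e0 * e1)))" and d0: "d0 h = of_real ((h\<^sup>2 / 2)\<^sup>2)"
    unfolding c0_def d0_def using m eta0_eq by (simp_all add: numeral_eq_Suc lessThan_Suc fact_numeral)
  have T0: "T0 = [:1, of_real e0:] * [:1, of_real e1:]"
    and R0: "R0 h = [:1, of_real (- chi_lim 3 0 h):] * [:1, of_real (- chi_lim 3 1 h):]"
    unfolding T0_def R0_def Theta_poly_def RTheta_poly_def using \<open>q = 0\<close> m eta0_eq
    by (simp_all add: numeral_eq_Suc lessThan_Suc mult.commute)
  have h': "h \<noteq> 0" "0 < h" "h < 1"
    using h by auto
  note eqs = limit_acov_eqs_3[OF e(1,3,5,6) t h'(1) chi_lim_3_mult_add[OF h'(2,3)]]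
  show ?thesis
    unfolding acov_match_iff_limit_eqs[OF h eqs(1)[folded c0 T0 \<open>p - 1 = 2\<close>]]
    using eqs(2) unfolding c0 d0 T0 R0 \<open>p - 1 = 2\<close> .
qed

lemma not_chi_match_if_m3:
  assumes m: "m = 3" and h: "h \<in> {0<..<1}"
  shows "\<not> chi_match h"
proof
  assume "chi_match h"
  then obtain \<pi> where \<pi>: "\<pi> permutes {..<2}" "\<forall>i<2. - eta0 i = of_real (chi_lim 3 (\<pi> i) h)"
    using m by (auto simp: chi_match_def)
  have "0 \<in> \<pi> ` {..<2}"
    using permutes_image[OF \<pi>(1)] by simp
  then obtain i where i: "i < 2" "\<pi> i = 0"
    by auto
  obtain e0 e1 t0 t1 where "eta0 0 = of_real e0" "eta0 1 = of_real e1" "0 < e0" "e0 < 1" "0 < e1" "e1 < 1"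
    using eta0_if_m3[OF m] by blast
  moreover have "i = 0 \<or> i = 1"
    using i(1) by auto
  ultimately obtain e where e: "eta0 i = of_real e" "0 < e" "e < 1"
    by blast
  have "- eta0 i = of_real (chi_lim 3 0 h)"
    using \<pi>(2) i by metis
  then have "of_real (- e) = (of_real (chi_lim 3 0 h) :: complex)"
    using e(1) by simp
  then have "- e = chi_lim 3 0 h"
    by (simp only: of_real_eq_iff)
  with e show False
    using one_le_abs_chi_lim_3_0[of h] h by auto
qed

lemma acov_match_iff:
  assumes h: "h \<in> {0<..<1}"
  shows "acov_match h \<longleftrightarrow>
    (if p - q = 1 then True
     else if p - q = 2 then h = (3 + sqrt 3) / 6 \<or> h = (3 - sqrt 3) / 6
     else h = (15 + sqrt (225 - 30 * sqrt 30)) / 30 \<or> h = (15 - sqrt (225 - 30 * sqrt 30)) / 30)"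
proof -
  consider "m = 1" | "m = 2" | "m = 3"
    using pq by linarith
  then show ?thesis
  proof cases
    case 1
    then show ?thesis using acov_match_if_m1[OF 1 h] by simp
  next
    case 2
    then show ?thesis using acov_match_iff_m2[OF 2 h] mult_one_minus_eq_1_6_iff by simp
  next
    case 3
    then show ?thesis using acov_match_iff_m3[OF 3 h] square_mult_one_minus_eq_1_30_iff h by simp
  qed
qed

lemma ma_match_iff_stable:
  assumes h: "h \<in> {0<..<1}" and "acov_match h"
  shows "ma_match h \<longleftrightarrow> (\<forall>k<q. 0 < Re (\<mu> k)) \<and> (\<forall>i<p - q - 1. \<bar>chi_lim (p - q) i h\<bar> < 1)"
proof -
  have "chi_match h \<longleftrightarrow> (\<forall>i<m - 1. \<bar>chi_lim m i h\<bar> < 1)"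
  proof -
    consider "m = 1" | "m = 2" | "m = 3"
      using pq by linarith
    then show ?thesis
    proof cases
      case 1
      then show ?thesis using chi_match_if_m1 by simp
    next
      case 2
      have stable: "(\<forall>i<m - 1. \<bar>chi_lim m i h\<bar> < 1) \<longleftrightarrow> 1 / 2 < h"
        using 2 abs_chi_lim_2_less_1_iff[of h] h by simp
      have "h = (3 + sqrt 3) / 6 \<or> h = (3 - sqrt 3) / 6"
        using 2 acov_match_iff[OF h] \<open>acov_match h\<close> by simp
      then show ?thesis
        unfolding chi_match_iff_m2[OF 2 h] stable by (rule larger_root_1_6_iff)
    next
      case 3
      then show ?thesis
        using not_chi_match_if_m3[OF 3 h] one_le_abs_chi_lim_3_0[of h] h by force
    qed
  qed
  then show ?thesis
    using ma_match_iff[OF h] by simp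
qed

lemma ma_match_set:
  "{h \<in> {0<..<1}. ma_match h} =
     (if \<forall>k<q. 0 < Re (\<mu> k)
      then (if p - q = 1 then {0<..<1} else if p - q = 2 then {(3 + sqrt 3) / 6} else {})
      else {})"
proof -
  have "{h \<in> {0<..<1}. chi_match h} =
      (if p - q = 1 then {0<..<1} else if p - q = 2 then {(3 + sqrt 3) / 6} else {})"
  proof -
    consider "m = 1" | "m = 2" | "m = 3"
      using pq by linarith
    then show ?thesis
    proof cases
      case 1
      then show ?thesis using chi_match_if_m1 by auto
    next
      case 2
      have "(3 + sqrt 3) / 6 \<in> {0<..<1::real}"
        using two_minus_sqrt_3(2) by (simp add: add_pos_nonneg)
      then show ?thesis using 2 chi_match_iff_m2[OF 2] by auto
    next
      case 3
      then show ?thesis using not_chi_match_if_m3[OF 3] by auto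
    qed
  qed
  moreover have "{h \<in> {0<..<1}. ma_match h} = {h \<in> {0<..<1}. (\<forall>k<q. 0 < Re (\<mu> k)) \<and> chi_match h}"
    using ma_match_iff by blast
  ultimately show ?thesis
    by auto
qed

end

theorem corollary4p6:
  fixes p q :: nat and \<sigma> :: real
    and lam \<mu> :: "nat \<Rightarrow> complex"
    and \<xi> :: "nat \<Rightarrow> complex"
    and \<eta> \<zeta> :: "real \<Rightarrow> nat \<Rightarrow> complex" and \<sigma>2 :: "real \<Rightarrow> real"
    and \<theta>0 :: "real \<Rightarrow> real \<Rightarrow> real"
    and \<rho> chiR :: "real \<Rightarrow> real \<Rightarrow> nat \<Rightarrow> complex"
  assumes pq: "q < p" "p \<le> 3" and sig: "\<sigma> > 0"
    and lam_neg: "\<forall>j<p. Re (lam j) < 0"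
    and lam_dist: "inj_on lam {..<p}"
    and mu_nz: "\<forall>k<q. Re (\<mu> k) \<noteq> 0"
    and real_poly: "\<forall>x::real. (\<Prod>j<p. (of_real x - lam j)) \<in> \<real> \<and> (\<Prod>k<q. (of_real x + \<mu> k)) \<in> \<real>"
    and coprime: "\<forall>j<p. \<forall>k<q. lam j \<noteq> - \<mu> k"
    \<comment> \<open>zeros of alpha_{p-q-1}\<close>
    and xi: "bij_betw \<xi> {..<p - q - 1} {x. x \<noteq> 0 \<and> alpha (p - q - 1) x = 0}"
    \<comment> \<open>known asymptotics of the sampled CARMA process\<close>
    and eta: "\<forall>i<p - q - 1. ((\<lambda>\<Delta>. \<eta> \<Delta> i) \<longlongrightarrow> eta_lim (\<xi> i)) (at_right 0)"
    and zeta: "\<forall>k<q. ((\<lambda>\<Delta>. (\<zeta> \<Delta> k - (1 - of_real (sgn (Re (\<mu> k))) * \<mu> k * of_real \<Delta>)) / of_real \<Delta>)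
                      \<longlongrightarrow> 0) (at_right 0)"
    and sig2_pos: "\<forall>\<Delta>>0. \<sigma>2 \<Delta> > 0"
    and sig2: "(\<lambda>\<Delta>. complex_of_real (\<sigma>2 \<Delta>)) \<sim>[at_right 0]
               (\<lambda>\<Delta>. of_real (\<sigma>\<^sup>2 * \<Delta> ^ (2 * (p - q) - 1) / fact (2 * (p - q) - 1))
                      / (\<Prod>i<p - q - 1. eta_lim (\<xi> i)))"
    \<comment> \<open>known asymptotics of the Riemann sum\<close>
    and theta0: "\<forall>h\<in>{0<..<1}. (\<lambda>\<Delta>. \<theta>0 \<Delta> h) \<sim>[at_right 0]
                     (\<lambda>\<Delta>. \<sigma> * (h * \<Delta>) ^ (p - q - 1) / fact (p - q - 1))"
    and rho: "\<forall>h\<in>{0<..<1}. \<forall>k<q.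
                ((\<lambda>\<Delta>. (\<rho> \<Delta> h k - (1 - of_real \<Delta> * \<mu> k)) / of_real \<Delta>) \<longlongrightarrow> 0) (at_right 0)"
    and chi: "\<forall>h\<in>{0<..<1}. \<forall>i<p - q - 1.
                ((\<lambda>\<Delta>. chiR \<Delta> h i) \<longlongrightarrow> of_real (chi_lim (p - q) i h)) (at_right 0)"
  shows
    "(\<forall>h\<in>{0<..<1}.
        (\<forall>k::nat. (\<lambda>\<Delta>. ma_acov (\<sigma>2 \<Delta>) (Theta_poly (p - q) q (\<eta> \<Delta>) (\<zeta> \<Delta>)) k) \<sim>[at_right 0]
                  (\<lambda>\<Delta>. ma_acov \<Delta> (smult (of_real (\<theta>0 \<Delta> h)) (RTheta_poly (p - q) q (\<rho> \<Delta> h) (chiR \<Delta> h))) k))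
        \<longleftrightarrow>
        (if p - q = 1 then True
         else if p - q = 2 then h = (3 + sqrt 3) / 6 \<or> h = (3 - sqrt 3) / 6
         else h = (15 + sqrt (225 - 30 * sqrt 30)) / 30 \<or> h = (15 - sqrt (225 - 30 * sqrt 30)) / 30))
     \<and>
     (\<forall>h\<in>{0<..<1}.
        (\<forall>k::nat. (\<lambda>\<Delta>. ma_acov (\<sigma>2 \<Delta>) (Theta_poly (p - q) q (\<eta> \<Delta>) (\<zeta> \<Delta>)) k) \<sim>[at_right 0]
                  (\<lambda>\<Delta>. ma_acov \<Delta> (smult (of_real (\<theta>0 \<Delta> h)) (RTheta_poly (p - q) q (\<rho> \<Delta> h) (chiR \<Delta> h))) k))
        \<longrightarrow>
        ((\<forall>k<q. ((\<lambda>\<Delta>. (\<zeta> \<Delta> k - \<rho> \<Delta> h k) / of_real \<Delta>) \<longlongrightarrow> 0) (at_right 0)) \<and>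
         (\<exists>\<pi>. \<pi> permutes {..<p - q - 1} \<and>
               (\<forall>i<p - q - 1. ((\<lambda>\<Delta>. - \<eta> \<Delta> i - chiR \<Delta> h (\<pi> i)) \<longlongrightarrow> 0) (at_right 0)))
         \<longleftrightarrow>
         (\<forall>k<q. Re (\<mu> k) > 0) \<and> (\<forall>i<p - q - 1. \<bar>chi_lim (p - q) i h\<bar> < 1)))
     \<and>
     {h\<in>{0<..<1}.
        (\<forall>k<q. ((\<lambda>\<Delta>. (\<zeta> \<Delta> k - \<rho> \<Delta> h k) / of_real \<Delta>) \<longlongrightarrow> 0) (at_right 0)) \<and>
        (\<exists>\<pi>. \<pi> permutes {..<p - q - 1} \<and>
              (\<forall>i<p - q - 1. ((\<lambda>\<Delta>. - \<eta> \<Delta> i - chiR \<Delta> h (\<pi> i)) \<longlongrightarrow> 0) (at_right 0)))}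
     = (if (\<forall>k<q. Re (\<mu> k) > 0)
        then (if p - q = 1 then {0<..<1} else if p - q = 2 then {(3 + sqrt 3) / 6} else {})
        else {})"
proof -
  \<comment> \<open>The conditions on \<open>lam\<close>, the realness of the polynomials and \<open>\<sigma>2 > 0\<close> only
    describe the CARMA setting; the conclusion follows from the assumed expansions alone.\<close>
  interpret sampled_carma_asymptotics p q \<sigma> \<mu> \<xi> \<eta> \<zeta> \<sigma>2 \<theta>0 \<rho> chiR
    by unfold_locales (fact pq sig mu_nz xi eta zeta sig2 theta0 rho chi)+
  show ?thesis
    using acov_match_iff ma_match_iff_stable ma_match_set
    unfolding acov_match_def ma_match_def by blast
qed

end
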